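(* Let $f:\mathbb{R}^d\to\mathbb{R}$ be convex and differentiable with a minimizer $x_\ast$. Let $x_0\in\mathbb{R}^d$, $r_\epsilon>0$, and let $g_0,g_1,\dots$ be vectors in $\mathbb{R}^d$ (the (stochastic) gradients used at $x_0,x_1,\dots$). Consider the DoWG iterates $x_{k+1}=x_k-\eta_k g_k$ with \[ \eta_k=\frac{\overline{r}_k^2}{\sqrt{v_k}},\qquad \overline{r}_k=\max\Big(\max_{i\le k}\|x_i-x_0\|,\ r_\epsilon\Big),\qquad v_k=\sum_{i=0}^k \overline{r}_i^2\|g_i\|^2 . \] Let $d_k=\|x_k-x_\ast\|$ and $\overline{d}_t=\max_{k\le t} d_k$. Then for every $t$, \[ \sum_{k=0}^{t-1}\overline{r}_k^2\langle\nabla f(x_k),x_k-x_\ast\rangle \le 2\overline{r}_t\big[\overline{d}_t+\overline{r}_t\big]\sqrt{v_{t-1}}+\sum_{k=0}^{t-1}\overline{r}_k^2\langle\nabla f(x_k)-g_k,x_k-x_\ast\rangle . \]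
   Context: All norms are Euclidean. The stepsizes are assumed well defined (i.e., $v_k>0$). *)

theory Defs
  imports "HOL-Analysis.Analysis"
begin

definition dowg_rbar :: "(nat \<Rightarrow> 'a::euclidean_space) \<Rightarrow> real \<Rightarrow> nat \<Rightarrow> real" where
  "dowg_rbar x r_eps k = max (Max ((\<lambda>i. norm (x i - x 0)) ` {..k})) r_eps"

definition dowg_v :: "(nat \<Rightarrow> 'a::euclidean_space) \<Rightarrow> (nat \<Rightarrow> 'a) \<Rightarrow> real \<Rightarrow> nat \<Rightarrow> real" where
  "dowg_v x g r_eps k = (\<Sum>i\<le>k. (dowg_rbar x r_eps i)\<^sup>2 * (norm (g i))\<^sup>2)"

definition dowg_eta :: "(nat \<Rightarrow> 'a::euclidean_space) \<Rightarrow> (nat \<Rightarrow> 'a) \<Rightarrow> real \<Rightarrow> nat \<Rightarrow> real" where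
  "dowg_eta x g r_eps k = (dowg_rbar x r_eps k)\<^sup>2 / sqrt (dowg_v x g r_eps k)"

definition dbar :: "(nat \<Rightarrow> 'a::euclidean_space) \<Rightarrow> 'a \<Rightarrow> nat \<Rightarrow> real" where
  "dbar x xs t = Max ((\<lambda>k. norm (x k - xs)) ` {..t})"

end

theory Submission
  imports Defs
begin

text \<open>
  Let w(n) = sqrt(v(n-1)) with w(0) = 0, so that the step size is r(k)^2 / w(k+1), and put
  a(k) = r(k)^2 |g(k)|^2 = w(k+1)^2 - w(k)^2. Expanding |x(k+1) - x*|^2 gives
  r(k)^2 <g(k), x(k) - x*> = w(k+1) (d(k)^2 - d(k+1)^2) / 2 + r(k)^2 a(k) / (2 w(k+1)).
  Summation by parts turns the first sum into the sum of (w(k+1) - w(k)) (d(k)^2 - d(t)^2),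
  which is at most 4 r(t) dbar(t) w(t) since all iterates up to t lie within r(t) of x(0).
  In the second sum a(k) / w(k+1) <= 2 (w(k+1) - w(k)), which telescopes to 2 w(t).
\<close>

lemma gradient_step_inner_eq:
  fixes u e :: "'a::real_inner"
  assumes "W > 0"
  shows "c * (u \<bullet> e)
    = W / 2 * ((norm e)\<^sup>2 - (norm (e - (c / W) *\<^sub>R u))\<^sup>2) + c\<^sup>2 * (norm u)\<^sup>2 / (2 * W)"
proof -
  define s where "s = c / W"
  have "(norm (e - s *\<^sub>R u))\<^sup>2 = (e - s *\<^sub>R u) \<bullet> (e - s *\<^sub>R u)"
    by (simp add: power2_norm_eq_inner)
  also have "\<dots> = e \<bullet> e - 2 * s * (u \<bullet> e) + s\<^sup>2 * (u \<bullet> u)"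
    by (simp add: inner_diff_left inner_diff_right inner_commute[of e u] power2_eq_square
        algebra_simps)
  finally have expand: "(norm (e - s *\<^sub>R u))\<^sup>2 = (norm e)\<^sup>2 - 2 * s * (u \<bullet> e) + s\<^sup>2 * (norm u)\<^sup>2"
    by (simp add: power2_norm_eq_inner)
  show ?thesis
    unfolding s_def[symmetric] expand using assms by (simp add: s_def field_simps power2_eq_square)
qed

lemma norm_sq_diff_le:
  fixes a b z :: "'a::real_normed_vector"
  shows "(norm (a - z))\<^sup>2 - (norm (b - z))\<^sup>2 \<le> norm (a - b) * (norm (a - z) + norm (b - z))"
proof -
  have "norm (a - z) - norm (b - z) \<le> norm (a - b)"
    using norm_triangle_ineq2[of "a - z" "b - z"] by simp
  then have "(norm (a - z) - norm (b - z)) * (norm (a - z) + norm (b - z))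
      \<le> norm (a - b) * (norm (a - z) + norm (b - z))"
    by (intro mult_right_mono) auto
  then show ?thesis
    by (simp add: power2_eq_square algebra_simps)
qed

lemma diff_squares_div_le:
  fixes w w' :: real
  assumes "0 \<le> w" "w \<le> w'"
  shows "(w'\<^sup>2 - w\<^sup>2) / w' \<le> 2 * (w' - w)"
proof (cases "w' = 0")
  case False
  have "w'\<^sup>2 - w\<^sup>2 = (w' - w) * (w' + w)"
    by (simp add: power2_eq_square algebra_simps)
  also have "\<dots> \<le> (w' - w) * (2 * w')"
    using assms by (intro mult_left_mono) auto
  finally show ?thesis
    using assms False by (simp add: divide_le_eq mult.commute mult.left_commute)
qed (use assms in simp)

lemma sum_div_sqrt_partial_sums_le:
  fixes a :: "nat \<Rightarrow> real"
  assumes "\<And>k. 0 \<le> a k"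
  shows "(\<Sum>k<t. a k / sqrt (\<Sum>i\<le>k. a i)) \<le> 2 * sqrt (\<Sum>i<t. a i)"
proof -
  define w where "w n = sqrt (\<Sum>i<n. a i)" for n
  have "a k / sqrt (\<Sum>i\<le>k. a i) \<le> 2 * (w (Suc k) - w k)" for k
  proof -
    have "0 \<le> w k" "w k \<le> w (Suc k)" "(w (Suc k))\<^sup>2 - (w k)\<^sup>2 = a k"
      using assms by (simp_all add: w_def sum_nonneg)
    moreover have "sqrt (\<Sum>i\<le>k. a i) = w (Suc k)"
      by (simp add: w_def lessThan_Suc_atMost)
    ultimately show ?thesis
      using diff_squares_div_le[of "w k" "w (Suc k)"] by simp
  qed
  then have "(\<Sum>k<t. a k / sqrt (\<Sum>i\<le>k. a i)) \<le> (\<Sum>k<t. 2 * (w (Suc k) - w k))"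
    by (rule sum_mono)
  also have "\<dots> = 2 * w t"
    by (simp only: sum_distrib_left[symmetric] sum_lessThan_telescope) (simp add: w_def)
  finally show ?thesis
    by (simp add: w_def)
qed

lemma weighted_telescope_le:
  fixes w \<delta> :: "nat \<Rightarrow> real"
  assumes "mono w" "w 0 = 0" "\<And>k. k \<le> t \<Longrightarrow> \<delta> k - \<delta> t \<le> B"
  shows "(\<Sum>k<t. w (Suc k) * (\<delta> k - \<delta> (Suc k))) \<le> B * w t"
proof -
  have "(\<Sum>k<n. w (Suc k) * (\<delta> k - \<delta> (Suc k))) + w n * (\<delta> n - \<delta> t) \<le> B * w n"
    if "n \<le> t" for n
    using that
  proof (induction n)
    case (Suc n)
    have "(w (Suc n) - w n) * (\<delta> n - \<delta> t) \<le> (w (Suc n) - w n) * B"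
      using Suc.prems assms(3) \<open>mono w\<close> by (intro mult_left_mono) (auto simp: mono_iff_le_Suc)
    with Suc show ?case
      by (simp add: algebra_simps)
  qed (simp add: assms(2))
  from this[of t] show ?thesis
    by simp
qed

lemma dowg_rbar_mono:
  assumes "k \<le> T"
  shows "dowg_rbar x r k \<le> dowg_rbar x r T"
proof -
  have "Max ((\<lambda>i. norm (x i - x 0)) ` {..k}) \<le> Max ((\<lambda>i. norm (x i - x 0)) ` {..T})"
    using assms by (intro Max_mono) auto
  then show ?thesis
    unfolding dowg_rbar_def by linarith
qed

lemma norm_diff_le_dowg_rbar:
  assumes "k \<le> T"
  shows "norm (x k - x 0) \<le> dowg_rbar x r T"
proof -
  have "norm (x k - x 0) \<le> Max ((\<lambda>i. norm (x i - x 0)) ` {..T})"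
    using assms by (intro Max_ge) auto
  then show ?thesis
    unfolding dowg_rbar_def by linarith
qed

lemma dowg_rbar_nonneg: "0 \<le> dowg_rbar x r k"
  using norm_diff_le_dowg_rbar[of 0 k x r] by simp

lemma norm_diff_le_dbar: "k \<le> t \<Longrightarrow> norm (x k - xs) \<le> dbar x xs t"
  unfolding dbar_def by (intro Max_ge) auto

lemma dowg_dist_sq_diff_le:
  assumes "k \<le> t"
  shows "(norm (x k - xs))\<^sup>2 - (norm (x t - xs))\<^sup>2 \<le> 4 * dowg_rbar x r t * dbar x xs t"
proof -
  have "norm (x k - x t) \<le> norm (x k - x 0) + norm (x t - x 0)"
    using norm_triangle_ineq4[of "x k - x 0" "x t - x 0"] by simp
  also have "\<dots> \<le> 2 * dowg_rbar x r t"
    using norm_diff_le_dowg_rbar[OF assms, of x r] norm_diff_le_dowg_rbar[of t t x r] by simp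
  finally have "norm (x k - x t) \<le> 2 * dowg_rbar x r t" .
  moreover have "norm (x k - xs) + norm (x t - xs) \<le> 2 * dbar x xs t"
    using norm_diff_le_dbar[OF assms, of x xs] norm_diff_le_dbar[of t t x xs] by simp
  ultimately have "norm (x k - x t) * (norm (x k - xs) + norm (x t - xs))
      \<le> (2 * dowg_rbar x r t) * (2 * dbar x xs t)"
    by (intro mult_mono) (auto simp: dowg_rbar_nonneg)
  then show ?thesis
    using norm_sq_diff_le[of "x k" xs "x t"] by simp
qed

definition dowg_w :: "(nat \<Rightarrow> 'a::euclidean_space) \<Rightarrow> (nat \<Rightarrow> 'a) \<Rightarrow> real \<Rightarrow> nat \<Rightarrow> real" where
  "dowg_w x g r n = sqrt (\<Sum>i<n. (dowg_rbar x r i)\<^sup>2 * (norm (g i))\<^sup>2)"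

lemma dowg_w_Suc: "dowg_w x g r (Suc k) = sqrt (dowg_v x g r k)"
  by (simp add: dowg_w_def dowg_v_def lessThan_Suc_atMost)

lemma dowg_w_eq_sqrt_dowg_v:
  "dowg_w x g r t = sqrt (if t = 0 then 0 else dowg_v x g r (t - 1))"
  by (cases t) (simp add: dowg_w_def, simp add: dowg_w_Suc)

lemma dowg_w_nonneg: "0 \<le> dowg_w x g r n"
  by (simp add: dowg_w_def sum_nonneg)

lemma mono_dowg_w: "mono (dowg_w x g r)"
  by (simp add: mono_iff_le_Suc dowg_w_def sum_nonneg)

lemma dowg_step_inner_eq:
  assumes "dowg_v x g r k > 0"
    and "x (Suc k) = x k - dowg_eta x g r k *\<^sub>R g k"
  shows "(dowg_rbar x r k)\<^sup>2 * (g k \<bullet> (x k - xs))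
    = dowg_w x g r (Suc k) * ((norm (x k - xs))\<^sup>2 - (norm (x (Suc k) - xs))\<^sup>2) / 2
      + (dowg_rbar x r k)\<^sup>2 * ((dowg_rbar x r k)\<^sup>2 * (norm (g k))\<^sup>2 / dowg_w x g r (Suc k)) / 2"
proof -
  have step: "x (Suc k) - xs = (x k - xs) - ((dowg_rbar x r k)\<^sup>2 / dowg_w x g r (Suc k)) *\<^sub>R g k"
    using assms(2) by (simp add: dowg_eta_def dowg_w_Suc)
  have "dowg_w x g r (Suc k) > 0"
    using assms(1) by (simp add: dowg_w_Suc)
  then show ?thesis
    unfolding step
    using gradient_step_inner_eq[of "dowg_w x g r (Suc k)" "(dowg_rbar x r k)\<^sup>2" "g k" "x k - xs"]
    by (simp add: power2_eq_square)
qed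

lemma dowg_distance_sum_le:
  "(\<Sum>k<t. dowg_w x g r (Suc k) * ((norm (x k - xs))\<^sup>2 - (norm (x (Suc k) - xs))\<^sup>2))
    \<le> 4 * dowg_rbar x r t * dbar x xs t * dowg_w x g r t"
  using mono_dowg_w by (rule weighted_telescope_le) (simp_all add: dowg_w_def dowg_dist_sq_diff_le)

lemma dowg_adaptive_sum_le:
  "(\<Sum>k<t. (dowg_rbar x r k)\<^sup>2 * ((dowg_rbar x r k)\<^sup>2 * (norm (g k))\<^sup>2 / dowg_w x g r (Suc k)))
    \<le> 2 * (dowg_rbar x r t)\<^sup>2 * dowg_w x g r t"
proof -
  define a where "a k = (dowg_rbar x r k)\<^sup>2 * (norm (g k))\<^sup>2" for k
  have w_Suc: "dowg_w x g r (Suc k) = sqrt (\<Sum>i\<le>k. a i)" for k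
    by (simp add: dowg_w_Suc dowg_v_def a_def)
  have "(\<Sum>k<t. (dowg_rbar x r k)\<^sup>2 * (a k / dowg_w x g r (Suc k)))
      \<le> (\<Sum>k<t. (dowg_rbar x r t)\<^sup>2 * (a k / dowg_w x g r (Suc k)))"
    by (intro sum_mono mult_right_mono power_mono)
      (simp_all add: dowg_rbar_mono dowg_rbar_nonneg a_def dowg_w_nonneg)
  also have "\<dots> \<le> (dowg_rbar x r t)\<^sup>2 * (2 * dowg_w x g r t)"
    unfolding sum_distrib_left[symmetric] w_Suc
    by (intro mult_left_mono) (simp_all add: dowg_w_def a_def sum_div_sqrt_partial_sums_le)
  finally show ?thesis
    by (simp add: a_def)
qed

lemma dowg_gradient_sum_le:
  assumes "\<And>k. dowg_v x g r k > 0"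
    and "\<And>k. x (Suc k) = x k - dowg_eta x g r k *\<^sub>R g k"
  shows "(\<Sum>k<t. (dowg_rbar x r k)\<^sup>2 * (g k \<bullet> (x k - xs)))
    \<le> 2 * dowg_rbar x r t * (dbar x xs t + dowg_rbar x r t) * dowg_w x g r t"
proof -
  let ?R = "dowg_rbar x r t" and ?D = "dbar x xs t" and ?w = "dowg_w x g r t"
  have "(\<Sum>k<t. (dowg_rbar x r k)\<^sup>2 * (g k \<bullet> (x k - xs)))
    = (\<Sum>k<t. dowg_w x g r (Suc k) * ((norm (x k - xs))\<^sup>2 - (norm (x (Suc k) - xs))\<^sup>2)) / 2
      + (\<Sum>k<t. (dowg_rbar x r k)\<^sup>2 * ((dowg_rbar x r k)\<^sup>2 * (norm (g k))\<^sup>2 / dowg_w x g r (Suc k))) / 2"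
    unfolding dowg_step_inner_eq[OF assms] by (simp add: sum.distrib sum_divide_distrib)
  also have "\<dots> \<le> 2 * ?R * ?D * ?w + ?R\<^sup>2 * ?w"
    using dowg_distance_sum_le[of x g r xs t] dowg_adaptive_sum_le[of x r g t] by linarith
  also have "\<dots> \<le> 2 * ?R * (?D + ?R) * ?w"
    using mult_nonneg_nonneg[OF zero_le_power2[of ?R] dowg_w_nonneg[of x g r t]]
    by (simp add: algebra_simps power2_eq_square)
  finally show ?thesis .
qed

theorem lemma4:
  fixes f :: "'a::euclidean_space \<Rightarrow> real"
    and grad :: "'a \<Rightarrow> 'a"
    and x g :: "nat \<Rightarrow> 'a"
    and xs :: 'a
    and r_eps :: real
    and t :: nat
  assumes convex: "convex_on UNIV f"
    and grad: "\<And>y. GDERIV f y :> grad y"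
    and minimizer: "\<And>y. f xs \<le> f y"
    and r_eps_pos: "r_eps > 0"
    and v_pos: "\<And>k. dowg_v x g r_eps k > 0"
    and iter: "\<And>k. x (Suc k) = x k - dowg_eta x g r_eps k *\<^sub>R g k"
  shows "(\<Sum>k<t. (dowg_rbar x r_eps k)\<^sup>2 * (grad (x k) \<bullet> (x k - xs)))
     \<le> 2 * dowg_rbar x r_eps t * (dbar x xs t + dowg_rbar x r_eps t)
         * sqrt (if t = 0 then 0 else dowg_v x g r_eps (t - 1))
       + (\<Sum>k<t. (dowg_rbar x r_eps k)\<^sup>2 * ((grad (x k) - g k) \<bullet> (x k - xs)))"
proof -
  have "(\<Sum>k<t. (dowg_rbar x r_eps k)\<^sup>2 * (grad (x k) \<bullet> (x k - xs)))
      = (\<Sum>k<t. (dowg_rbar x r_eps k)\<^sup>2 * (g k \<bullet> (x k - xs)))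
        + (\<Sum>k<t. (dowg_rbar x r_eps k)\<^sup>2 * ((grad (x k) - g k) \<bullet> (x k - xs)))"
    by (simp add: sum.distrib[symmetric] inner_diff_left algebra_simps)
  then show ?thesis
    using dowg_gradient_sum_le[OF v_pos iter, of xs t]
    by (simp add: dowg_w_eq_sqrt_dowg_v)
qed

end
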